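(* Let $G$ be a $P_6$-free graph, let $\Omega$ be a potential maximal clique of $G$, and let $C^1,C^2$ be two different connected components of $G-\Omega$. Then $N(C^1)\setminus N(C^2)$ is fully adjacent to $C^1$, or $N(C^2)\setminus N(C^1)$ is fully adjacent to $C^2$.
   Context: All graphs are finite, simple and undirected. $P_6$ is the path on six vertices; $G$ is $P_6$-free if it has no induced subgraph isomorphic to $P_6$. For a vertex set $C$, $N(C)$ is the set of vertices outside $C$ with a neighbour in $C$. A set $Z$ is fully adjacent to $C$ if every vertex of $Z$ is adjacent to every vertex of $C$. A triangulation of $G$ is a set $F$ of non-edges such that $(V(G),E(G)\cup F)$ is chordal; it is minimal if no proper subset is a triangulation. A potential maximal clique of $G$ is a maximal clique of $(V(G),E(G)\cup F)$ for some minimal triangulation $F$. *)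

theory Defs
  imports Main
begin

definition simple_graph :: "'a set \<Rightarrow> 'a set set \<Rightarrow> bool" where
  "simple_graph V E \<longleftrightarrow> finite V \<and>
     (\<forall>e\<in>E. \<exists>u v. e = {u, v} \<and> u \<noteq> v \<and> u \<in> V \<and> v \<in> V)"

definition adj :: "'a set set \<Rightarrow> 'a \<Rightarrow> 'a \<Rightarrow> bool" where
  "adj E u v \<longleftrightarrow> {u, v} \<in> E"

definition P6_free :: "'a set \<Rightarrow> 'a set set \<Rightarrow> bool" where
  "P6_free V E \<longleftrightarrow> \<not> (\<exists>xs. length xs = 6 \<and> distinct xs \<and> set xs \<subseteq> V \<and>
      (\<forall>i<6. \<forall>j<6. adj E (xs ! i) (xs ! j) \<longleftrightarrow> (i = j + 1 \<or> j = i + 1)))"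

definition chordal :: "'a set \<Rightarrow> 'a set set \<Rightarrow> bool" where
  "chordal V E \<longleftrightarrow>
     (\<forall>xs. let n = length xs in
        (n \<ge> 4 \<and> distinct xs \<and> set xs \<subseteq> V \<and>
         (\<forall>i<n. adj E (xs ! i) (xs ! ((i + 1) mod n))))
        \<longrightarrow> (\<exists>i<n. \<exists>j<n. i \<noteq> j \<and> j \<noteq> (i + 1) mod n \<and> i \<noteq> (j + 1) mod n
                 \<and> adj E (xs ! i) (xs ! j)))"

definition non_edges :: "'a set \<Rightarrow> 'a set set \<Rightarrow> 'a set set" where
  "non_edges V E = {{u, v} | u v. u \<in> V \<and> v \<in> V \<and> u \<noteq> v} - E"

definition triangulation :: "'a set \<Rightarrow> 'a set set \<Rightarrow> 'a set set \<Rightarrow> bool" where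
  "triangulation V E F \<longleftrightarrow> F \<subseteq> non_edges V E \<and> chordal V (E \<union> F)"

definition minimal_triangulation :: "'a set \<Rightarrow> 'a set set \<Rightarrow> 'a set set \<Rightarrow> bool" where
  "minimal_triangulation V E F \<longleftrightarrow> triangulation V E F \<and>
     (\<forall>F'. F' \<subset> F \<longrightarrow> \<not> triangulation V E F')"

definition is_clique :: "'a set \<Rightarrow> 'a set set \<Rightarrow> 'a set \<Rightarrow> bool" where
  "is_clique V E K \<longleftrightarrow> K \<subseteq> V \<and> (\<forall>u\<in>K. \<forall>v\<in>K. u \<noteq> v \<longrightarrow> adj E u v)"

definition maximal_clique :: "'a set \<Rightarrow> 'a set set \<Rightarrow> 'a set \<Rightarrow> bool" where
  "maximal_clique V E K \<longleftrightarrow> is_clique V E K \<and> (\<forall>K'. is_clique V E K' \<longrightarrow> K \<subseteq> K' \<longrightarrow> K' = K)"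

definition potential_maximal_clique :: "'a set \<Rightarrow> 'a set set \<Rightarrow> 'a set \<Rightarrow> bool" where
  "potential_maximal_clique V E \<Omega> \<longleftrightarrow>
     (\<exists>F. minimal_triangulation V E F \<and> maximal_clique V (E \<union> F) \<Omega>)"

definition adj_in :: "'a set set \<Rightarrow> 'a set \<Rightarrow> 'a \<Rightarrow> 'a \<Rightarrow> bool" where
  "adj_in E S u v \<longleftrightarrow> u \<in> S \<and> v \<in> S \<and> adj E u v"

definition component :: "'a set set \<Rightarrow> 'a set \<Rightarrow> 'a set \<Rightarrow> bool" where
  "component E S C \<longleftrightarrow> (\<exists>x\<in>S. C = {y. (adj_in E S)\<^sup>*\<^sup>* x y})"

definition nbhd :: "'a set \<Rightarrow> 'a set set \<Rightarrow> 'a set \<Rightarrow> 'a set" where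
  "nbhd V E C = {v \<in> V - C. \<exists>u\<in>C. adj E u v}"

definition fully_adjacent :: "'a set set \<Rightarrow> 'a set \<Rightarrow> 'a set \<Rightarrow> bool" where
  "fully_adjacent E Z C \<longleftrightarrow> (\<forall>z\<in>Z. \<forall>c\<in>C. adj E z c)"

end

theory Submission
  imports Defs
begin

text \<open>Suppose both alternatives fail: x \<in> N(C1) - N(C2) misses a vertex of C1 and
  y \<in> N(C2) - N(C1) misses a vertex of C2. Then x, y \<in> \<Omega>, and since C1 is connected it
  contains an edge ab with x adjacent to a but not to b; likewise C2 contains such an edge
  a'b' for y. As \<Omega> is a clique of a minimal triangulation, x and y are joined by a path
  whose inner vertices avoid \<Omega>: otherwise the fill edges leaving the component of x in
  G - (\<Omega> - {x, y}) could be deleted. A shortest such path is induced, and because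
  y \<notin> N(C1) and x \<notin> N(C2) no vertex of it after x touches C1 and none before y touches C2.
  So b a x \<dots> y a' b' is an induced path on at least six vertices.\<close>

section \<open>Components of induced subgraphs\<close>

lemma adj_sym: "adj E u v \<longleftrightarrow> adj E v u"
  by (simp add: adj_def insert_commute)

lemma simple_graph_adj_irrefl: "simple_graph V E \<Longrightarrow> \<not> adj E v v"
  by (auto simp: simple_graph_def adj_def doubleton_eq_iff)

lemma symp_adj_in: "symp (adj_in E S)"
  by (auto intro: sympI simp: adj_in_def adj_sym)

lemma rtranclp_adj_in_sym: "(adj_in E S)\<^sup>*\<^sup>* u v \<Longrightarrow> (adj_in E S)\<^sup>*\<^sup>* v u"
  using sympD[OF symp_rtranclp[OF symp_adj_in]] .

lemma rtranclp_adj_in_in: "(adj_in E S)\<^sup>*\<^sup>* u v \<Longrightarrow> u \<in> S \<Longrightarrow> v \<in> S"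
  by (induction rule: rtranclp_induct) (auto simp: adj_in_def)

lemma rtranclp_boundary_step:
  "r\<^sup>*\<^sup>* u v \<Longrightarrow> P u \<Longrightarrow> \<not> P v \<Longrightarrow> \<exists>a b. r\<^sup>*\<^sup>* u a \<and> r a b \<and> P a \<and> \<not> P b"
  by (induction rule: rtranclp_induct) blast+

lemma component_subset: "component E S C \<Longrightarrow> C \<subseteq> S"
  unfolding component_def using rtranclp_adj_in_in by fastforce

lemma component_reach_closed:
  assumes "component E S C" "u \<in> C" "(adj_in E S)\<^sup>*\<^sup>* u v"
  shows "v \<in> C"
  using assms unfolding component_def by (auto intro: rtranclp_trans)

lemma component_adj_closed:
  assumes "component E S C" "u \<in> C" "v \<in> S" "adj E u v"
  shows "v \<in> C"
proof -
  have "adj_in E S u v"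
    using assms component_subset[OF assms(1)] by (auto simp: adj_in_def)
  then show ?thesis using component_reach_closed[OF assms(1,2)] by blast
qed

lemma component_connected:
  assumes "component E S C" "u \<in> C" "v \<in> C"
  shows "(adj_in E S)\<^sup>*\<^sup>* u v"
proof -
  from assms(1) obtain r where "C = {y. (adj_in E S)\<^sup>*\<^sup>* r y}"
    unfolding component_def by blast
  with assms(2,3) show ?thesis by (auto intro: rtranclp_trans rtranclp_adj_in_sym)
qed

lemma components_disjoint:
  assumes "component E S C1" "component E S C2" "C1 \<noteq> C2"
  shows "C1 \<inter> C2 = {}"
proof (rule ccontr)
  assume "C1 \<inter> C2 \<noteq> {}"
  then obtain z where z: "z \<in> C1" "z \<in> C2" by blast
  have "C1 \<subseteq> C2" "C2 \<subseteq> C1"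
    using component_reach_closed[OF assms(2) z(2)] component_reach_closed[OF assms(1) z(1)]
      component_connected[OF assms(1) z(1)] component_connected[OF assms(2) z(2)] by blast+
  with assms(3) show False by blast
qed

lemma nbhd_component_disjoint: "component E S C \<Longrightarrow> nbhd V E C \<inter> S = {}"
  unfolding nbhd_def using component_adj_closed by fastforce

lemma component_nbhd_subset:
  assumes "component E (V - \<Omega>) C"
  shows "nbhd V E C \<subseteq> \<Omega>"
  using nbhd_component_disjoint[OF assms, of V] by (auto simp: nbhd_def)

lemma component_boundary_edge:
  assumes "component E S C" "x \<in> nbhd V E C" "c \<in> C" "\<not> adj E x c"
  shows "\<exists>a\<in>C. \<exists>b\<in>C. adj E a b \<and> adj E x a \<and> \<not> adj E x b"
proof -
  obtain u where "u \<in> C" "adj E u x" using assms(2) unfolding nbhd_def by blast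
  then obtain a b where ab: "(adj_in E S)\<^sup>*\<^sup>* u a" "adj_in E S a b" "adj E x a" "\<not> adj E x b"
    using rtranclp_boundary_step[OF component_connected[OF assms(1) _ assms(3)], of u "adj E x"] assms(4)
    by (auto simp: adj_sym)
  have "a \<in> C" using component_reach_closed[OF assms(1) \<open>u \<in> C\<close> ab(1)] .
  moreover have "b \<in> C" using component_adj_closed[OF assms(1) \<open>a \<in> C\<close>] ab(2) by (auto simp: adj_in_def)
  ultimately show ?thesis using ab(2-4) by (auto simp: adj_in_def)
qed

section \<open>Walks and induced paths\<close>

definition walk :: "'a set set \<Rightarrow> 'a set \<Rightarrow> 'a \<Rightarrow> 'a \<Rightarrow> 'a list \<Rightarrow> bool" where
  "walk E S x y xs \<longleftrightarrow>
     xs \<noteq> [] \<and> hd xs = x \<and> last xs = y \<and> set xs \<subseteq> S \<and> successively (adj E) xs"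

definition induced_path :: "'a set set \<Rightarrow> 'a list \<Rightarrow> bool" where
  "induced_path E xs \<longleftrightarrow> distinct xs \<and>
     (\<forall>i<length xs. \<forall>j<length xs. adj E (xs ! i) (xs ! j) \<longleftrightarrow> i = Suc j \<or> j = Suc i)"

lemma walk_rev: "walk E S x y xs \<Longrightarrow> walk E S y x (rev xs)"
  by (auto simp: walk_def hd_rev last_rev adj_sym)

lemma rtranclp_adj_in_imp_walk:
  "(adj_in E S)\<^sup>*\<^sup>* x y \<Longrightarrow> x \<in> S \<Longrightarrow> \<exists>xs. walk E S x y xs"
proof (induction rule: rtranclp_induct)
  case base
  then have "walk E S x x [x]" by (simp add: walk_def)
  then show ?case by blast
next
  case (step y z)
  then obtain xs where "walk E S x y xs" by blast
  with step.hyps(2) have "walk E S x z (xs @ [z])"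
    by (auto simp: walk_def adj_in_def successively_append_iff)
  then show ?case by blast
qed

lemma walk_shortcut:
  assumes w: "walk E S x y xs" and kj: "k \<le> j" "j < length xs"
    and start: "k = 0 \<Longrightarrow> xs ! j = x" and jump: "0 < k \<Longrightarrow> adj E (xs ! (k - 1)) (xs ! j)"
  shows "walk E S x y (take k xs @ drop j xs)"
proof -
  have split: "successively (adj E) (take k xs) \<and> successively (adj E) (drop j xs)"
    using w successively_append_iff[of "adj E" "take k xs" "drop k xs"]
      successively_append_iff[of "adj E" "take j xs" "drop j xs"]
    by (simp add: walk_def)
  have "drop j xs \<noteq> []" "hd (drop j xs) = xs ! j" using kj by (auto simp: hd_drop_conv_nth)
  moreover have "last (take k xs) = xs ! (k - 1)" if "0 < k"
    using that kj by (subst last_conv_nth) auto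
  moreover have "hd (take k xs) = hd xs" if "0 < k" using that kj by simp
  ultimately show ?thesis
    using w split start jump kj set_take_subset[of k xs] set_drop_subset[of j xs]
    by (cases "k = 0") (auto simp: walk_def successively_append_iff)
qed

lemma shortest_walk_induced_path:
  assumes irrefl: "\<And>v. \<not> adj E v v" and "walk E S x y xs"
  shows "\<exists>ys. walk E S x y ys \<and> induced_path E ys"
proof -
  obtain ys where ys: "walk E S x y ys" and min: "\<And>zs. walk E S x y zs \<Longrightarrow> length ys \<le> length zs"
    using ex_has_least_nat[of "walk E S x y" xs length] assms(2) by blast
  have no_shortcut: "\<not> walk E S x y (take k ys @ drop j ys)" if "k < j" "j < length ys" for k j
    using min[of "take k ys @ drop j ys"] that by auto
  have step: "adj E (ys ! i) (ys ! Suc i)" if "Suc i < length ys" for i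
    using ys that by (simp add: walk_def successively_nth)
  have no_repeat: "ys ! i \<noteq> ys ! j" if "i < j" "j < length ys" for i j
  proof
    assume eq: "ys ! i = ys ! j"
    have "walk E S x y (take i ys @ drop j ys)"
    proof (rule walk_shortcut[OF ys])
      show "ys ! j = x" if "i = 0" using eq that ys by (auto simp: walk_def hd_conv_nth)
      show "adj E (ys ! (i - 1)) (ys ! j)" if "0 < i"
        using step[of "i - 1"] eq that \<open>i < j\<close> \<open>j < length ys\<close> by simp
    qed (use that in auto)
    with no_shortcut that show False by blast
  qed
  have no_chord: "\<not> adj E (ys ! i) (ys ! j)" if "Suc i < j" "j < length ys" for i j
  proof
    assume "adj E (ys ! i) (ys ! j)"
    then have "walk E S x y (take (Suc i) ys @ drop j ys)"
      using that by (intro walk_shortcut[OF ys]) auto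
    with no_shortcut that show False by blast
  qed
  have "distinct ys"
    unfolding distinct_conv_nth by (metis no_repeat linorder_neqE_nat)
  moreover have "adj E (ys ! i) (ys ! j) \<longleftrightarrow> i = Suc j \<or> j = Suc i"
    if "i < length ys" "j < length ys" for i j
    using that irrefl step no_chord adj_sym
    by (metis Suc_lessI linorder_neqE_nat)
  ultimately show ?thesis using ys unfolding induced_path_def by blast
qed

lemma induced_path_rev: "induced_path E xs \<Longrightarrow> induced_path E (rev xs)"
  unfolding induced_path_def by (auto simp: rev_nth)

lemma induced_path_Cons:
  assumes p: "induced_path E xs" and "xs \<noteq> []" "v \<notin> set xs" "\<not> adj E v v"
    and "adj E v (hd xs)" and "\<forall>u\<in>set (tl xs). \<not> adj E v u"
  shows "induced_path E (v # xs)"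
proof -
  have "adj E v (xs ! j) \<longleftrightarrow> j = 0" if "j < length xs" for j
  proof (cases j)
    case (Suc k)
    then have "xs ! j \<in> set (tl xs)" using that by (simp add: nth_tl[symmetric])
    then show ?thesis using assms(6) Suc by auto
  qed (use assms in \<open>simp add: hd_conv_nth\<close>)
  then show ?thesis
    using p assms(3,4) unfolding induced_path_def
    by (auto simp: nth_Cons adj_sym split: nat.split)
qed

lemma not_P6_free_if_induced_path:
  assumes "induced_path E xs" "set xs \<subseteq> V" "6 \<le> length xs"
  shows "\<not> P6_free V E"
  unfolding P6_free_def not_not
proof (intro exI conjI)
  let ?ys = "take 6 xs"
  show "length ?ys = 6" "distinct ?ys" "set ?ys \<subseteq> V"
    using assms set_take_subset[of 6 xs] by (auto simp: induced_path_def)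
  show "\<forall>i<6. \<forall>j<6. adj E (?ys ! i) (?ys ! j) \<longleftrightarrow> (i = j + 1 \<or> j = i + 1)"
    using assms(1,3) by (auto simp: induced_path_def)
qed

section \<open>Fill edges of minimal triangulations\<close>

lemma nat_first_change:
  "a \<le> b \<Longrightarrow> P a \<Longrightarrow> \<not> P b \<Longrightarrow> \<exists>k. a \<le> k \<and> k < b \<and> P k \<and> \<not> P (Suc k)"
  by (induction b rule: dec_induct) (auto, metis less_Suc_eq)

lemma mod_neq_if_close:
  assumes "(a::nat) < b" "b < a + n"
  shows "a mod n \<noteq> b mod n"
proof
  assume "a mod n = b mod n"
  then have "n dvd b - a" using assms(1) by (metis mod_eq_dvd_iff_nat less_imp_le)
  moreover have "0 < b - a" "b - a < n" using assms by auto
  ultimately show False using nat_dvd_not_less by blast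
qed

lemma cycle_meets_separator_twice:
  fixes xs :: "'a list"
  defines "n \<equiv> length xs"
  assumes cover: "set xs \<subseteq> D \<union> R \<union> T"
    and disj: "D \<inter> R = {}" "D \<inter> T = {}" "R \<inter> T = {}"
    and no_cross: "\<And>i. i < n \<Longrightarrow> xs ! i \<in> D \<Longrightarrow> xs ! ((i + 1) mod n) \<notin> R"
      "\<And>i. i < n \<Longrightarrow> xs ! i \<in> R \<Longrightarrow> xs ! ((i + 1) mod n) \<notin> D"
    and pq: "p < n" "q < n" "xs ! p \<in> D" "xs ! q \<in> R"
  shows "\<exists>i<n. \<exists>j<n. i \<noteq> j \<and> j \<noteq> (i + 1) mod n \<and> i \<noteq> (j + 1) mod n \<and> xs ! i \<in> T \<and> xs ! j \<in> T"
proof -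
  define g where "g k = xs ! ((p + k) mod n)" for k
  have n0: "0 < n" using pq by linarith
  have g_cover: "g k \<in> D \<union> R \<union> T" for k
    using cover n0 unfolding g_def n_def by (meson mod_less_divisor nth_mem subsetD)
  have g_step: "(g k \<in> D \<longrightarrow> g (Suc k) \<notin> R) \<and> (g k \<in> R \<longrightarrow> g (Suc k) \<notin> D)" for k
    using no_cross[of "(p + k) mod n"] n0 unfolding g_def by (simp add: mod_Suc_eq)
  define s where "s = (if p \<le> q then q - p else q + n - p)"
  have "g 0 \<in> D" "g n \<in> D" "g s \<in> R" "0 < s" "s < n"
    using pq disj(1) unfolding g_def s_def by auto
  \<comment> \<open>Going round the cycle from p, the first exit from D and the first exit from R after q
    both land in T, and they are at least two steps apart in either direction.\<close>
  then obtain k1 where k1: "k1 < s" "g k1 \<in> D" "g (Suc k1) \<notin> D"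
    using nat_first_change[of 0 s "\<lambda>k. g k \<in> D"] disj(1) by auto
  have T1: "g (Suc k1) \<in> T" using g_cover[of "Suc k1"] g_step[of k1] k1 by blast
  have "Suc k1 < s" using T1 \<open>g s \<in> R\<close> k1(1) disj(3) by (metis Suc_lessI disjoint_iff)
  obtain k2 where k2: "s \<le> k2" "k2 < n" "g k2 \<in> R" "g (Suc k2) \<notin> R"
    using nat_first_change[of s n "\<lambda>k. g k \<in> R"] \<open>g n \<in> D\<close> \<open>g s \<in> R\<close> \<open>s < n\<close> disj(1) by auto
  have T2: "g (Suc k2) \<in> T" using g_cover[of "Suc k2"] g_step[of k2] k2 by blast
  have "Suc k2 < n" using T2 \<open>g n \<in> D\<close> k2(2) disj(2) by (metis Suc_lessI disjoint_iff)
  let ?i = "(p + Suc k1) mod n" and ?j = "(p + Suc k2) mod n"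
  have "?i \<noteq> ?j" "?j \<noteq> (?i + 1) mod n"
    using mod_neq_if_close[of "p + Suc k1" "p + Suc k2" n]
      mod_neq_if_close[of "p + Suc k1 + 1" "p + Suc k2" n] \<open>Suc k1 < s\<close> k2(1) \<open>Suc k2 < n\<close>
    by (simp_all add: mod_Suc_eq)
  moreover have "?i \<noteq> (?j + 1) mod n"
  proof -
    have "(p + Suc k2 + 1) mod n \<noteq> (p + Suc k1 + n) mod n"
      by (rule mod_neq_if_close) (use \<open>Suc k1 < s\<close> k2(1) \<open>Suc k2 < n\<close> in linarith)+
    then have "(p + Suc k2 + 1) mod n \<noteq> ?i" by (metis mod_add_self2)
    then show ?thesis by (metis mod_add_left_eq)
  qed
  moreover have "?i < n" "?j < n" using n0 by simp_all
  ultimately show ?thesis using T1 T2 unfolding g_def by blast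
qed

lemma chordal_remove_crossing_edges:
  assumes chordal: "chordal V H"
    and sub: "\<And>u v. adj H' u v \<Longrightarrow> adj H u v"
    and missing: "\<And>u v. adj H u v \<Longrightarrow> \<not> adj H' u v \<Longrightarrow> u \<in> D \<and> v \<in> R \<or> u \<in> R \<and> v \<in> D"
    and no_cross: "\<And>u v. u \<in> D \<Longrightarrow> v \<in> R \<Longrightarrow> \<not> adj H' u v"
    and cover: "V \<subseteq> D \<union> R \<union> T" and disj: "D \<inter> R = {}" "D \<inter> T = {}" "R \<inter> T = {}"
    and clique: "\<And>u v. u \<in> T \<Longrightarrow> v \<in> T \<Longrightarrow> u \<noteq> v \<Longrightarrow> adj H' u v"
  shows "chordal V H'"
  unfolding chordal_def Let_def
proof (intro allI impI)
  fix xs :: "'a list"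
  let ?n = "length xs"
  let ?chord = "\<lambda>H. \<exists>i<?n. \<exists>j<?n. i \<noteq> j \<and> j \<noteq> (i + 1) mod ?n \<and> i \<noteq> (j + 1) mod ?n \<and> adj H (xs ! i) (xs ! j)"
  assume cycle: "4 \<le> ?n \<and> distinct xs \<and> set xs \<subseteq> V \<and> (\<forall>i<?n. adj H' (xs ! i) (xs ! ((i + 1) mod ?n)))"
  then have "?chord H" using chordal sub unfolding chordal_def Let_def by blast
  then obtain i j where ij: "i < ?n" "j < ?n" "i \<noteq> j" "j \<noteq> (i + 1) mod ?n" "i \<noteq> (j + 1) mod ?n"
    "adj H (xs ! i) (xs ! j)" by blast
  show "?chord H'"
  proof (cases "adj H' (xs ! i) (xs ! j)")
    case False
    then obtain p q where pq: "p < ?n" "q < ?n" "xs ! p \<in> D" "xs ! q \<in> R"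
      using missing[OF ij(6)] ij(1,2) by blast
    have "set xs \<subseteq> D \<union> R \<union> T" using cycle cover by blast
    moreover have "xs ! ((k + 1) mod ?n) \<notin> R" if "k < ?n" "xs ! k \<in> D" for k
      using that cycle no_cross by blast
    moreover have "xs ! ((k + 1) mod ?n) \<notin> D" if "k < ?n" "xs ! k \<in> R" for k
      using that cycle no_cross adj_sym by metis
    ultimately obtain i' j' where "i' < ?n" "j' < ?n" "i' \<noteq> j'" "j' \<noteq> (i' + 1) mod ?n"
      "i' \<noteq> (j' + 1) mod ?n" "xs ! i' \<in> T" "xs ! j' \<in> T"
      using cycle_meets_separator_twice[OF _ disj _ _ pq] by blast
    moreover have "xs ! i' \<noteq> xs ! j'" using cycle calculation by (simp add: nth_eq_iff_index_eq)
    ultimately show ?thesis using clique by blast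
  qed (use ij in blast)
qed

lemma triangulation_remove_crossing_fill:
  assumes tri: "triangulation V E F"
    and clique: "\<And>u v. u \<in> T \<Longrightarrow> v \<in> T \<Longrightarrow> u \<noteq> v \<Longrightarrow> adj (E \<union> F) u v"
    and D: "D \<subseteq> V - T" and sep: "\<And>u v. u \<in> D \<Longrightarrow> v \<in> V - T - D \<Longrightarrow> \<not> adj E u v"
  shows "triangulation V E (F - {{u, v} | u v. u \<in> D \<and> v \<in> V - T - D})"
    (is "triangulation V E (F - ?X)")
  unfolding triangulation_def
proof
  show "F - ?X \<subseteq> non_edges V E" using tri unfolding triangulation_def by blast
  show "chordal V (E \<union> (F - ?X))"
  proof (rule chordal_remove_crossing_edges[where H = "E \<union> F" and D = D and R = "V - T - D" and T = T])
    show "chordal V (E \<union> F)" using tri unfolding triangulation_def by blast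
    show "u \<in> D \<and> v \<in> V - T - D \<or> u \<in> V - T - D \<and> v \<in> D"
      if "adj (E \<union> F) u v" "\<not> adj (E \<union> (F - ?X)) u v" for u v
      using that by (auto simp: adj_def doubleton_eq_iff)
    show "\<not> adj (E \<union> (F - ?X)) u v" if "u \<in> D" "v \<in> V - T - D" for u v
      using that sep[OF that] by (auto simp: adj_def)
    show "adj (E \<union> (F - ?X)) u v" if "u \<in> T" "v \<in> T" "u \<noteq> v" for u v
      using that clique[OF that] D by (auto simp: adj_def doubleton_eq_iff)
  qed (use D in \<open>auto simp: adj_def\<close>)
qed

lemma minimal_triangulation_clique_connected:
  assumes mt: "minimal_triangulation V E F" and cl: "is_clique V (E \<union> F) \<Omega>"
    and xy: "x \<in> \<Omega>" "y \<in> \<Omega>" "x \<noteq> y"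
  shows "(adj_in E (V - (\<Omega> - {x, y})))\<^sup>*\<^sup>* x y"
proof (rule ccontr)
  define T where "T = \<Omega> - {x, y}"
  define D where "D = {v. (adj_in E (V - T))\<^sup>*\<^sup>* x v}"
  assume "\<not> (adj_in E (V - (\<Omega> - {x, y})))\<^sup>*\<^sup>* x y"
  then have "y \<notin> D" unfolding D_def T_def by blast
  have "x \<in> V - T" "y \<in> V - T" using cl xy unfolding T_def is_clique_def by auto
  then have D: "D \<subseteq> V - T" and "x \<in> D" using rtranclp_adj_in_in unfolding D_def by fastforce+
  have sep: "\<not> adj E u v" if "u \<in> D" "v \<in> V - T - D" for u v
  proof
    assume "adj E u v"
    then have "adj_in E (V - T) u v" using that D by (auto simp: adj_in_def)
    then have "v \<in> D" using that(1) unfolding D_def by (auto intro: rtranclp.rtrancl_into_rtrancl)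
    with that(2) show False by blast
  qed
  let ?X = "{{u, v} | u v. u \<in> D \<and> v \<in> V - T - D}"
  have "\<not> adj E x y" using sep \<open>x \<in> D\<close> \<open>y \<notin> D\<close> \<open>y \<in> V - T\<close> by blast
  moreover have "adj (E \<union> F) x y" using cl xy unfolding is_clique_def by blast
  ultimately have "{x, y} \<in> F" by (simp add: adj_def)
  moreover have "{x, y} \<in> ?X" using \<open>x \<in> D\<close> \<open>y \<notin> D\<close> \<open>y \<in> V - T\<close> by blast
  ultimately have "F - ?X \<subset> F" by blast
  moreover have "triangulation V E (F - ?X)"
  proof (rule triangulation_remove_crossing_fill[OF _ _ D sep])
    show "triangulation V E F" using mt unfolding minimal_triangulation_def by blast
    show "adj (E \<union> F) u v" if "u \<in> T" "v \<in> T" "u \<noteq> v" for u v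
      using cl that unfolding is_clique_def T_def by blast
  qed
  ultimately show False using mt unfolding minimal_triangulation_def by blast
qed

lemma potential_maximal_clique_induced_path:
  assumes "simple_graph V E" "potential_maximal_clique V E \<Omega>" "x \<in> \<Omega>" "y \<in> \<Omega>" "x \<noteq> y"
  shows "\<exists>ws. walk E (V - (\<Omega> - {x, y})) x y ws \<and> induced_path E ws"
proof -
  obtain F where "minimal_triangulation V E F" "is_clique V (E \<union> F) \<Omega>"
    using assms(2) unfolding potential_maximal_clique_def maximal_clique_def by blast
  then have "(adj_in E (V - (\<Omega> - {x, y})))\<^sup>*\<^sup>* x y"
    by (rule minimal_triangulation_clique_connected[OF _ _ assms(3-5)])
  moreover have "x \<in> V - (\<Omega> - {x, y})"
    using \<open>is_clique V (E \<union> F) \<Omega>\<close> assms(3) unfolding is_clique_def by blast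
  ultimately have "\<exists>xs. walk E (V - (\<Omega> - {x, y})) x y xs"
    by (rule rtranclp_adj_in_imp_walk)
  then obtain xs where "walk E (V - (\<Omega> - {x, y})) x y xs" ..
  then show ?thesis
    by (rule shortest_walk_induced_path[OF simple_graph_adj_irrefl[OF assms(1)]])
qed

section \<open>Induced paths leaving a component\<close>

lemma closed_nbhd_propagates:
  assumes "component E S C" "successively (adj E) ys" "set ys \<subseteq> V" "set (butlast ys) \<subseteq> S"
    and "ys \<noteq> []" "hd ys \<in> C \<union> nbhd V E C"
  shows "last ys \<in> C \<union> nbhd V E C"
  using assms(2-6)
proof (induction ys)
  case (Cons v ys)
  show ?case
  proof (cases "ys = []")
    case False
    then have "v \<in> S" "adj E v (hd ys)" "hd ys \<in> V"
      using Cons.prems by (auto simp: successively_Cons)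
    then have "v \<in> C" using Cons.prems(5) nbhd_component_disjoint[OF assms(1), of V] by auto
    then have "hd ys \<in> C \<union> nbhd V E C"
      using \<open>adj E v (hd ys)\<close> \<open>hd ys \<in> V\<close> by (auto simp: nbhd_def)
    with False Cons show ?thesis by (auto simp: successively_Cons)
  qed (use Cons.prems in simp)
qed simp

lemma walk_tail_avoids_closed_nbhd:
  assumes C: "component E (V - \<Omega>) C" and w: "walk E (V - (\<Omega> - {x, y})) x y ws"
    and "distinct ws" and y: "y \<notin> C \<union> nbhd V E C"
  shows "set (tl ws) \<inter> (C \<union> nbhd V E C) = {}"
proof (rule ccontr)
  assume "set (tl ws) \<inter> (C \<union> nbhd V E C) \<noteq> {}"
  then obtain u where u: "u \<in> set (tl ws)" "u \<in> C \<union> nbhd V E C" by blast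
  then obtain us vs where tl: "tl ws = us @ u # vs" by (meson split_list)
  have ws: "ws = x # us @ u # vs" using w tl by (auto simp: walk_def intro: list.expand)
  let ?ys = "u # vs"
  have "set (butlast ?ys) \<subseteq> V - \<Omega>"
  proof
    fix z assume z: "z \<in> set (butlast ?ys)"
    have "distinct ?ys" "x \<notin> set ?ys" "last ?ys = y" using \<open>distinct ws\<close> w ws by (auto simp: walk_def)
    then have "z \<noteq> x" "z \<noteq> y" using z in_set_butlastD
      by (metis append_butlast_last_id distinct_append disjoint_iff list.set_intros(1) list.discI)+
    moreover have "z \<in> set ws" using z ws in_set_butlastD by fastforce
    ultimately show "z \<in> V - \<Omega>" using w by (auto simp: walk_def)
  qed
  moreover have "successively (adj E) ?ys" "set ?ys \<subseteq> V"
    using w ws by (auto simp: walk_def successively_append_iff successively_Cons)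
  ultimately have "last ?ys \<in> C \<union> nbhd V E C"
    using closed_nbhd_propagates[OF C, of ?ys V] u(2) by simp
  then show False using y w ws by (simp add: walk_def)
qed

lemma walk_init_avoids_closed_nbhd:
  assumes "component E (V - \<Omega>) C" "walk E (V - (\<Omega> - {x, y})) x y ws"
    and "distinct ws" "x \<notin> C \<union> nbhd V E C"
  shows "set (butlast ws) \<inter> (C \<union> nbhd V E C) = {}"
proof -
  have "walk E (V - (\<Omega> - {y, x})) y x (rev ws)"
    using walk_rev[OF assms(2)] by (simp add: insert_commute)
  then have "set (tl (rev ws)) \<inter> (C \<union> nbhd V E C) = {}"
    using walk_tail_avoids_closed_nbhd[OF assms(1)] assms(3,4) by simp
  then show ?thesis by (metis butlast_rev rev_rev_ident set_rev)
qed

lemma induced_path_extend_into: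
  assumes irrefl: "\<And>v. \<not> adj E v v" and p: "induced_path E ws" "ws \<noteq> []" "set ws \<subseteq> V"
    and hd: "hd ws \<notin> C" and tl: "set (tl ws) \<inter> (C \<union> nbhd V E C) = {}"
    and ab: "a \<in> C" "b \<in> C" "adj E a b" "adj E (hd ws) a" "\<not> adj E (hd ws) b"
  shows "induced_path E (b # a # ws)"
proof -
  have ws: "ws = hd ws # tl ws" using p(2) by simp
  have far: "\<not> adj E c u \<and> \<not> adj E u c" if "c \<in> C" "u \<in> set (tl ws)" for c u
    using that tl p(3) ws set_subset_Cons[of "tl ws" "hd ws"] by (auto simp: nbhd_def adj_sym[of E u c])
  have outside: "set ws \<inter> C = {}" using hd tl ws by (metis Int_Un_distrib Un_empty set_ConsD disjoint_iff)
  have path: "induced_path E (a # ws)"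
    using p(1,2) outside ab(1) ab(4)[unfolded adj_sym[of E "hd ws"]] far irrefl
    by (intro induced_path_Cons) auto
  have "b \<noteq> a" using ab(3) irrefl by blast
  then have "b \<notin> set (a # ws)" using outside ab(2) by auto
  moreover have "\<forall>u\<in>set ws. \<not> adj E b u"
    using far ab(2,5) ws by (metis adj_sym set_ConsD)
  ultimately show ?thesis
    using ab(3) irrefl by (intro induced_path_Cons[OF path]) (auto simp: adj_sym[of E b a])
qed

lemma induced_path_extend_both_ends:
  assumes irrefl: "\<And>v. \<not> adj E v v" and p: "induced_path E ws" "ws \<noteq> []" "set ws \<subseteq> V"
    and C1: "hd ws \<notin> C1" "set (tl ws) \<inter> (C1 \<union> nbhd V E C1) = {}"
    and C2: "last ws \<notin> C2" "set (butlast ws) \<inter> (C2 \<union> nbhd V E C2) = {}"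
    and far: "C1 \<subseteq> V" "C1 \<inter> (C2 \<union> nbhd V E C2) = {}"
    and ab: "a \<in> C1" "b \<in> C1" "adj E a b" "adj E (hd ws) a" "\<not> adj E (hd ws) b"
    and ab': "a' \<in> C2" "b' \<in> C2" "adj E a' b'" "adj E (last ws) a'" "\<not> adj E (last ws) b'"
  shows "induced_path E (b # a # ws @ [a', b'])"
proof -
  have path: "induced_path E (b # a # ws)"
    using induced_path_extend_into[OF irrefl p C1 ab] .
  have "tl (rev ws) = rev (butlast ws)" by (metis butlast_rev rev_rev_ident)
  then have tl: "set (tl (rev (b # a # ws))) \<inter> (C2 \<union> nbhd V E C2) = {}"
    using C2(2) far(2) ab(1,2) p(2) by auto
  have "induced_path E (b' # a' # rev (b # a # ws))"
    by (rule induced_path_extend_into[OF irrefl induced_path_rev[OF path] _ _ _ tl])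
      (use p(2,3) C2(1) ab ab' far in \<open>auto simp: hd_rev\<close>)
  then show ?thesis using induced_path_rev by fastforce
qed

theorem lemma4:
  fixes V :: "'a set" and E :: "'a set set" and \<Omega> C1 C2 :: "'a set"
  assumes "simple_graph V E"
    and "P6_free V E"
    and "potential_maximal_clique V E \<Omega>"
    and "component E (V - \<Omega>) C1"
    and "component E (V - \<Omega>) C2"
    and "C1 \<noteq> C2"
  shows "fully_adjacent E (nbhd V E C1 - nbhd V E C2) C1 \<or>
         fully_adjacent E (nbhd V E C2 - nbhd V E C1) C2"
proof (rule ccontr)
  assume "\<not> ?thesis"
  then obtain x c1 y c2 where
    x: "x \<in> nbhd V E C1" "x \<notin> nbhd V E C2" "c1 \<in> C1" "\<not> adj E x c1" and
    y: "y \<in> nbhd V E C2" "y \<notin> nbhd V E C1" "c2 \<in> C2" "\<not> adj E y c2"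
    unfolding fully_adjacent_def by blast
  have C: "C1 \<subseteq> V - \<Omega>" "C2 \<subseteq> V - \<Omega>" "nbhd V E C1 \<subseteq> \<Omega>" "nbhd V E C2 \<subseteq> \<Omega>"
    using component_subset[OF assms(4)] component_subset[OF assms(5)]
      component_nbhd_subset[OF assms(4)] component_nbhd_subset[OF assms(5)] by auto
  have "C1 \<inter> C2 = {}" using components_disjoint[OF assms(4-6)] .
  then have far: "C1 \<inter> (C2 \<union> nbhd V E C2) = {}" using C by blast
  have xy: "x \<in> \<Omega>" "y \<in> \<Omega>" "x \<noteq> y" using x(1) y(1,2) C(3,4) by auto
  obtain a b where ab: "a \<in> C1" "b \<in> C1" "adj E a b" "adj E x a" "\<not> adj E x b"
    using component_boundary_edge[OF assms(4) x(1,3,4)] by blast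
  obtain a' b' where ab': "a' \<in> C2" "b' \<in> C2" "adj E a' b'" "adj E y a'" "\<not> adj E y b'"
    using component_boundary_edge[OF assms(5) y(1,3,4)] by blast
  obtain ws where ws: "walk E (V - (\<Omega> - {x, y})) x y ws" "induced_path E ws"
    using potential_maximal_clique_induced_path[OF assms(1,3) xy] by blast
  then have ends: "ws \<noteq> []" "hd ws = x" "last ws = y" "set ws \<subseteq> V" "distinct ws"
    by (auto simp: walk_def induced_path_def)
  have tl1: "set (tl ws) \<inter> (C1 \<union> nbhd V E C1) = {}"
    using walk_tail_avoids_closed_nbhd[OF assms(4) ws(1) ends(5)] xy C y(2) by blast
  have tl2: "set (butlast ws) \<inter> (C2 \<union> nbhd V E C2) = {}"
    using walk_init_avoids_closed_nbhd[OF assms(5) ws(1) ends(5)] xy C x(2) by blast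
  have "induced_path E (b # a # ws @ [a', b'])"
    by (rule induced_path_extend_both_ends[OF simple_graph_adj_irrefl[OF assms(1)] ws(2) ends(1,4)
          _ tl1 _ tl2 _ far ab(1-3) _ _ ab'(1-3)])
      (use ends xy C ab ab' in auto)
  moreover have "6 \<le> length (b # a # ws @ [a', b'])"
    using ends xy(3) by (cases ws) (auto split: if_splits simp: Suc_le_eq)
  moreover have "set (b # a # ws @ [a', b']) \<subseteq> V" using ends ab ab' C by auto
  ultimately show False using not_P6_free_if_induced_path assms(2) by blast
qed

end
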